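(* Let $((\mathcal G,\Theta),\mathfrak g_1,\mathfrak g_2)$ be a twilled Lie triple system and $H:\mathfrak g_2\to\mathfrak g_1$ a linear map. Then the twisting $((\mathcal G,\Theta^H),\mathfrak g_1,\mathfrak g_2)$ is also a twilled Lie triple system (i.e. $\mathfrak g_1$ and $\mathfrak g_2$ are subalgebras for the bracket $\Theta^H$) if and only if $H\in C^0_{\mathsf{LTS}}(\mathfrak g_2,\mathfrak g_1)$ is a Maurer–Cartan element of the $L_\infty$-algebra $(C^*_{\mathsf{LTS}}(\mathfrak g_2,\mathfrak g_1),l_1,l_2,l_3)$, i.e. $$l_1(H)+\tfrac12 l_2(H,H)+\tfrac1{3!}l_3(H,H,H)=0,$$ where $l_1(f)=[\hat\mu_2,\hat f]_{\mathsf{LTS}}$, $l_2(f,g)=[[\hat\psi,\hat f]_{\mathsf{LTS}},\hat g]_{\mathsf{LTS}}$, $l_3(f,g,h)=[[[\hat\mu_1,\hat f]_{\mathsf{LTS}},\hat g]_{\mathsf{LTS}},\hat h]_{\mathsf{LTS}}$.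
   Context: All vector spaces are over a field $\mathbb K$ of characteristic $0$. A Lie triple system is a vector space with a trilinear bracket $[\cdot,\cdot,\cdot]$ satisfying $[x,x,y]=0$, $[x,y,z]+[y,z,x]+[z,x,y]=0$ and $[x,y,[z,w,t]]=[[x,y,z],w,t]+[z,[x,y,w],t]+[z,w,[x,y,t]]$; a subalgebra is a subspace closed under the bracket. Cochains: $C^p(\mathfrak g,\mathfrak g)=\mathrm{Hom}(\otimes^{2p+1}\mathfrak g,\mathfrak g)$ (degree $p$), arguments written $(\mathfrak X_1,\dots,\mathfrak X_p,x)$, $\mathfrak X_i=x_i\otimes y_i$. For $P\in C^p,Q\in C^q$: $(P\circ Q)(\mathfrak X_1,\dots,\mathfrak X_{p+q},x)=\sum_{k=1}^p(-1)^{(k-1)q}\sum_{\sigma\in\mathbb S(k-1,q)}(-1)^\sigma P(\mathfrak X_{\sigma(1)},\dots,\mathfrak X_{\sigma(k-1)},Q(\mathfrak X_{\sigma(k)},\dots,\mathfrak X_{\sigma(k+q-1)},x_{k+q})\otimes y_{k+q},\mathfrak X_{k+q+1},\dots,\mathfrak X_{p+q},x)+\sum_{k=1}^p(-1)^{(k-1)q}\sum_{\sigma\in\mathbb S(k-1,q)}(-1)^\sigma P(\mathfrak X_{\sigma(1)},\dots,\mathfrak X_{\sigma(k-1)},x_{k+q}\otimes Q(\mathfrak X_{\sigma(k)},\dots,\mathfrak X_{\sigma(k+q-1)},y_{k+q}),\mathfrak X_{k+q+1},\dots,\mathfrak X_{p+q},x)+\sum_{\sigma\in\mathbb S(p,q)}(-1)^\sigma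 P(\mathfrak X_{\sigma(1)},\dots,\mathfrak X_{\sigma(p)},Q(\mathfrak X_{\sigma(p+1)},\dots,\mathfrak X_{\sigma(p+q)},x))$ ($\mathbb S(i,j)$ = shuffles), $[P,Q]=P\circ Q-(-1)^{pq}Q\circ P$. $C^p_{\mathsf{LTS}}$ is the subspace of $P$ with $P(\dots,x,x,y)=0$ and vanishing cyclic sum in the last three arguments ($C^0_{\mathsf{LTS}}=\mathrm{Hom}(\mathfrak g,\mathfrak g)$), a graded Lie subalgebra with bracket $[\cdot,\cdot]_{\mathsf{LTS}}$; $\Theta\in C^1_{\mathsf{LTS}}$ is a Lie triple system bracket iff $[\Theta,\Theta]_{\mathsf{LTS}}=0$. $C^p_{\mathsf{LTS}}(\mathfrak g_2,\mathfrak g_1)$: maps $\otimes^{2p+1}\mathfrak g_2\to\mathfrak g_1$ with the same symmetries; its lift $\hat f$ to $\mathcal G=\mathfrak g_1\oplus\mathfrak g_2$ equals $f$ on $\otimes^{2p+1}\mathfrak g_2$ and vanishes on all other tensor summands; e.g. for $H:\mathfrak g_2\to\mathfrak g_1$, $\hat H(x,u)=(H(u),0)$. Twilled Lie triple system: Lie triple system $(\mathcal G,\Theta=[\cdot,\cdot,\cdot]_{\mathcal G})$, $\mathcal G=\mathfrak g_1\oplus\mathfrak g_2$, with $\mathfrak g_1,\mathfrak g_2$ subalgebras. With $[a,b,c]_i$ the $\mathfrak g_i$-component and $x,y,z\in\mathfrak g_1$, $u,v,w\in\mathfrak g_2$: $\hat\mu_1((x,u),(y,v),(z,w))=([x,y,z]_1,[x,y,w]_2+[u,y,z]_2-[v,x,z]_2)$,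 $\hat\psi((x,u),(y,v),(z,w))=([x,y,w]_1+[u,y,z]_1-[v,x,z]_1,[u,v,z]_2+[x,v,w]_2-[y,u,w]_2)$, $\hat\mu_2((x,u),(y,v),(z,w))=([u,v,z]_1+[x,v,w]_1-[y,u,w]_1,[u,v,w]_2)$. Twisting: $X_{\hat H}(\cdot)=[\cdot,\hat H]_{\mathsf{LTS}}$ and $\Theta^H=\sum_{k\ge0}\frac1{k!}X_{\hat H}^k(\Theta)$ (a finite sum). $L_\infty$-algebra: graded space with graded-symmetric degree $+1$ maps $l_k$ satisfying the generalized Jacobi identities; here $C^p_{\mathsf{LTS}}(\mathfrak g_2,\mathfrak g_1)$ has degree $p$, $l_k=0$ for $k\ge4$, and the values of $l_1,l_2,l_3$ (lifts of maps $\otimes^\bullet\mathfrak g_2\to\mathfrak g_1$) are identified with elements of $C^*_{\mathsf{LTS}}(\mathfrak g_2,\mathfrak g_1)$. A Maurer–Cartan element is a degree-$0$ element $\alpha$ with $\sum_k\frac1{k!}l_k(\alpha,\dots,\alpha)=0$. *)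

theory Defs
  imports Complex_Main "HOL-Library.Product_Plus"
begin

text \<open>A cochain of degree p in C^p(g,g) = Hom(tensor^(2p+1) g, g) is represented by its
values on elementary tensors: a function taking the list of pairs
[X_1,...,X_p] (X_i = x_i tensor y_i, stored as (x_i,y_i)) and the last argument x.
Only lists of length p are meaningful.\<close>

type_synonym 'g cochain = "('g \<times> 'g) list \<Rightarrow> 'g \<Rightarrow> 'g"

text \<open>(i,j)-shuffles of positions 0..i+j-1 (0-indexed): a shuffle sigma is determined by
the set S of values sigma(1..i); sigma(1..i) lists S increasingly, sigma(i+1..i+j)
lists the complement increasingly.\<close>

definition shuffles :: "nat \<Rightarrow> nat \<Rightarrow> nat set set" where
  "shuffles i j = {S. S \<subseteq> {0..<i+j} \<and> card S = i}"

text \<open>Number of inversions of the shuffle permutation (its sign is (-1)^this).\<close>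
definition shuffle_inv :: "nat \<Rightarrow> nat set \<Rightarrow> nat" where
  "shuffle_inv n S = card {(a,b). a \<in> S \<and> b \<in> {0..<n} - S \<and> b < a}"

definition sgn_act :: "nat \<Rightarrow> 'g::ab_group_add \<Rightarrow> 'g" where
  "sgn_act m v = (if even m then v else - v)"

definition shuf_first :: "('g \<times> 'g) list \<Rightarrow> nat set \<Rightarrow> ('g \<times> 'g) list" where
  "shuf_first Xs S = map (nth Xs) (sorted_list_of_set S)"

definition shuf_second :: "nat \<Rightarrow> ('g \<times> 'g) list \<Rightarrow> nat set \<Rightarrow> ('g \<times> 'g) list" where
  "shuf_second n Xs S = map (nth Xs) (sorted_list_of_set ({0..<n} - S))"

text \<open>The composition P o Q for P of degree p, Q of degree q (as in the paper;
X_{k+q} is Xs ! (k+q-1) and X_{k+q+1},...,X_{p+q} is drop (k+q) Xs).\<close>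

definition cochain_comp ::
  "nat \<Rightarrow> 'g::ab_group_add cochain \<Rightarrow> nat \<Rightarrow> 'g cochain \<Rightarrow> 'g cochain" where
  "cochain_comp p P q Q Xs x =
     (\<Sum>k\<in>{1..p}. \<Sum>S\<in>shuffles (k-1) q.
        sgn_act ((k-1)*q + shuffle_inv (k-1+q) S)
          (P (shuf_first Xs S @
              [(Q (shuf_second (k-1+q) Xs S) (fst (Xs ! (k-1+q))), snd (Xs ! (k-1+q)))]
              @ drop (k+q) Xs) x))
   + (\<Sum>k\<in>{1..p}. \<Sum>S\<in>shuffles (k-1) q.
        sgn_act ((k-1)*q + shuffle_inv (k-1+q) S)
          (P (shuf_first Xs S @
              [(fst (Xs ! (k-1+q)), Q (shuf_second (k-1+q) Xs S) (snd (Xs ! (k-1+q))))]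
              @ drop (k+q) Xs) x))
   + (\<Sum>S\<in>shuffles p q.
        sgn_act (shuffle_inv (p+q) S)
          (P (shuf_first Xs S) (Q (shuf_second (p+q) Xs S) x)))"

definition lts_bracket ::
  "nat \<Rightarrow> 'g::ab_group_add cochain \<Rightarrow> nat \<Rightarrow> 'g cochain \<Rightarrow> 'g cochain" where
  "lts_bracket p P q Q Xs x =
     cochain_comp p P q Q Xs x - sgn_act (p*q) (cochain_comp q Q p P Xs x)"

definition bracket_cochain :: "('g \<Rightarrow> 'g \<Rightarrow> 'g \<Rightarrow> 'g) \<Rightarrow> 'g cochain" where
  "bracket_cochain T Xs x = T (fst (Xs ! 0)) (snd (Xs ! 0)) x"

definition sum_scale ::
  "('k \<Rightarrow> 'v1 \<Rightarrow> 'v1) \<Rightarrow> ('k \<Rightarrow> 'v2 \<Rightarrow> 'v2) \<Rightarrow> 'k \<Rightarrow> 'v1 \<times> 'v2 \<Rightarrow> 'v1 \<times> 'v2" where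
  "sum_scale s1 s2 c a = (s1 c (fst a), s2 c (snd a))"

definition trilinear ::
  "('k::field \<Rightarrow> 'g::ab_group_add \<Rightarrow> 'g) \<Rightarrow> ('g \<Rightarrow> 'g \<Rightarrow> 'g \<Rightarrow> 'g) \<Rightarrow> bool" where
  "trilinear s T \<longleftrightarrow>
     (\<forall>b c. Vector_Spaces.linear s s (\<lambda>a. T a b c)) \<and>
     (\<forall>a c. Vector_Spaces.linear s s (\<lambda>b. T a b c)) \<and>
     (\<forall>a b. Vector_Spaces.linear s s (\<lambda>c. T a b c))"

definition lie_triple_system :: "('g::ab_group_add \<Rightarrow> 'g \<Rightarrow> 'g \<Rightarrow> 'g) \<Rightarrow> bool" where
  "lie_triple_system T \<longleftrightarrow>
     (\<forall>x y. T x x y = 0) \<and>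
     (\<forall>x y z. T x y z + T y z x + T z x y = 0) \<and>
     (\<forall>x y z w t. T x y (T z w t) = T (T x y z) w t + T z (T x y w) t + T z w (T x y t))"

text \<open>g1 = g1 x {0} and g2 = {0} x g2 are subalgebras of (G, T).\<close>
definition twilled ::
  "('v1::ab_group_add \<times> 'v2::ab_group_add \<Rightarrow> 'v1 \<times> 'v2 \<Rightarrow> 'v1 \<times> 'v2 \<Rightarrow> 'v1 \<times> 'v2) \<Rightarrow> bool" where
  "twilled T \<longleftrightarrow>
     (\<forall>x y z. snd (T (x,0) (y,0) (z,0)) = 0) \<and>
     (\<forall>u v w. fst (T (0,u) (0,v) (0,w)) = 0)"

definition i1 :: "'v1 \<Rightarrow> 'v1 \<times> 'v2::zero" where "i1 x = (x, 0)"
definition i2 :: "'v2 \<Rightarrow> 'v1::zero \<times> 'v2" where "i2 u = (0, u)"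

definition mu1_hat :: "('v1::ab_group_add \<times> 'v2::ab_group_add \<Rightarrow> 'v1 \<times> 'v2 \<Rightarrow> 'v1 \<times> 'v2 \<Rightarrow> 'v1 \<times> 'v2)
    \<Rightarrow> 'v1 \<times> 'v2 \<Rightarrow> 'v1 \<times> 'v2 \<Rightarrow> 'v1 \<times> 'v2 \<Rightarrow> 'v1 \<times> 'v2" where
  "mu1_hat T a b c = (case (a, b, c) of ((x,u),(y,v),(z,w)) \<Rightarrow>
     (fst (T (i1 x) (i1 y) (i1 z)),
      snd (T (i1 x) (i1 y) (i2 w)) + snd (T (i2 u) (i1 y) (i1 z)) - snd (T (i2 v) (i1 x) (i1 z))))"

definition psi_hat :: "('v1::ab_group_add \<times> 'v2::ab_group_add \<Rightarrow> 'v1 \<times> 'v2 \<Rightarrow> 'v1 \<times> 'v2 \<Rightarrow> 'v1 \<times> 'v2)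
    \<Rightarrow> 'v1 \<times> 'v2 \<Rightarrow> 'v1 \<times> 'v2 \<Rightarrow> 'v1 \<times> 'v2 \<Rightarrow> 'v1 \<times> 'v2" where
  "psi_hat T a b c = (case (a, b, c) of ((x,u),(y,v),(z,w)) \<Rightarrow>
     (fst (T (i1 x) (i1 y) (i2 w)) + fst (T (i2 u) (i1 y) (i1 z)) - fst (T (i2 v) (i1 x) (i1 z)),
      snd (T (i2 u) (i2 v) (i1 z)) + snd (T (i1 x) (i2 v) (i2 w)) - snd (T (i1 y) (i2 u) (i2 w))))"

definition mu2_hat :: "('v1::ab_group_add \<times> 'v2::ab_group_add \<Rightarrow> 'v1 \<times> 'v2 \<Rightarrow> 'v1 \<times> 'v2 \<Rightarrow> 'v1 \<times> 'v2)
    \<Rightarrow> 'v1 \<times> 'v2 \<Rightarrow> 'v1 \<times> 'v2 \<Rightarrow> 'v1 \<times> 'v2 \<Rightarrow> 'v1 \<times> 'v2" where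
  "mu2_hat T a b c = (case (a, b, c) of ((x,u),(y,v),(z,w)) \<Rightarrow>
     (fst (T (i2 u) (i2 v) (i1 z)) + fst (T (i1 x) (i2 v) (i2 w)) - fst (T (i1 y) (i2 u) (i2 w)),
      snd (T (i2 u) (i2 v) (i2 w))))"

text \<open>Lift of a cochain f : tensor^(2p+1) g2 -> g1 to G: equals f on tensor^(2p+1) g2 and
vanishes on all other tensor summands; on elementary tensors this is evaluation of f
at the g2-components, placed in g1.\<close>
definition lift ::
  "(('v2 \<times> 'v2) list \<Rightarrow> 'v2 \<Rightarrow> 'v1) \<Rightarrow> ('v1 \<times> 'v2::zero) cochain" where
  "lift f Xs x = (f (map (\<lambda>(a,b). (snd a, snd b)) Xs) (snd x), 0)"

definition lift0 :: "('v2 \<Rightarrow> 'v1) \<Rightarrow> ('v1 \<times> 'v2::zero) cochain" where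
  "lift0 H = lift (\<lambda>_ u. H u)"

definition X_op :: "('v2 \<Rightarrow> 'v1::ab_group_add) \<Rightarrow> ('v1 \<times> 'v2::ab_group_add) cochain
    \<Rightarrow> ('v1 \<times> 'v2) cochain" where
  "X_op H P = lts_bracket 1 P 0 (lift0 H)"

text \<open>Theta^H = sum_{k>=0} 1/k! X_H^k(Theta); the sum is finite, i.e. it is the sum over
k < N where N is the least index from which all X_H^k(Theta) vanish (on degree-1
arguments).\<close>

definition twist_length :: "('v2 \<Rightarrow> 'v1::ab_group_add) \<Rightarrow> ('v1 \<times> 'v2::ab_group_add) cochain \<Rightarrow> nat" where
  "twist_length H Th = (LEAST n. \<forall>m\<ge>n. \<forall>Xs x. length Xs = 1 \<longrightarrow> ((X_op H ^^ m) Th) Xs x = 0)"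

definition twist ::
  "('k::field_char_0 \<Rightarrow> 'v1::ab_group_add \<Rightarrow> 'v1) \<Rightarrow> ('k \<Rightarrow> 'v2::ab_group_add \<Rightarrow> 'v2)
   \<Rightarrow> ('v2 \<Rightarrow> 'v1) \<Rightarrow> ('v1 \<times> 'v2 \<Rightarrow> 'v1 \<times> 'v2 \<Rightarrow> 'v1 \<times> 'v2 \<Rightarrow> 'v1 \<times> 'v2)
   \<Rightarrow> 'v1 \<times> 'v2 \<Rightarrow> 'v1 \<times> 'v2 \<Rightarrow> 'v1 \<times> 'v2 \<Rightarrow> 'v1 \<times> 'v2" where
  "twist s1 s2 H T a b c =
     (let Th = bracket_cochain T in
      (\<Sum>k<twist_length H Th.
          sum_scale s1 s2 (1 / fact k) (((X_op H ^^ k) Th) [(a,b)] c)))"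

definition l1H :: "_ \<Rightarrow> ('v2 \<Rightarrow> 'v1::ab_group_add) \<Rightarrow> ('v1 \<times> 'v2::ab_group_add) cochain" where
  "l1H T H = lts_bracket 1 (bracket_cochain (mu2_hat T)) 0 (lift0 H)"

definition l2HH :: "_ \<Rightarrow> ('v2 \<Rightarrow> 'v1::ab_group_add) \<Rightarrow> ('v1 \<times> 'v2::ab_group_add) cochain" where
  "l2HH T H = lts_bracket 1 (lts_bracket 1 (bracket_cochain (psi_hat T)) 0 (lift0 H)) 0 (lift0 H)"

definition l3HHH :: "_ \<Rightarrow> ('v2 \<Rightarrow> 'v1::ab_group_add) \<Rightarrow> ('v1 \<times> 'v2::ab_group_add) cochain" where
  "l3HHH T H = lts_bracket 1 (lts_bracket 1 (lts_bracket 1 (bracket_cochain (mu1_hat T))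
                 0 (lift0 H)) 0 (lift0 H)) 0 (lift0 H)"

text \<open>H is a Maurer-Cartan element: l_1(H) + 1/2 l_2(H,H) + 1/3! l_3(H,H,H) = 0 as an
element of C^1_LTS(g2,g1), i.e. as a map tensor^3 g2 -> g1 (the values of the l_k are lifts,
identified with their restrictions to g2-arguments with values in g1).\<close>
definition maurer_cartan ::
  "('k::field_char_0 \<Rightarrow> 'v1::ab_group_add \<Rightarrow> 'v1) \<Rightarrow>
   ('v1 \<times> 'v2::ab_group_add \<Rightarrow> 'v1 \<times> 'v2 \<Rightarrow> 'v1 \<times> 'v2 \<Rightarrow> 'v1 \<times> 'v2) \<Rightarrow> ('v2 \<Rightarrow> 'v1) \<Rightarrow> bool" where
  "maurer_cartan s1 T H \<longleftrightarrow>
     (\<forall>u v w.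
        fst (l1H T H [(i2 u, i2 v)] (i2 w))
        + s1 (1/2) (fst (l2HH T H [(i2 u, i2 v)] (i2 w)))
        + s1 (1 / fact 3) (fst (l3HHH T H [(i2 u, i2 v)] (i2 w))) = 0)"

end

theory Submission
  imports Defs
begin

(* Let N be the lift of H, N (x, u) = (H u, 0). It kills g1 and takes values in g1, so N o N = 0.
   On degree-1 cochains X_H is the derivation
   f |-> f(N a, b, c) + f(a, N b, c) + f(a, b, N c) - N f(a, b, c);
   each application puts one more N into one of four slots, and two N's in one slot give zero,
   so X_H^5 Theta = 0 and Theta^H = sum_{k<5} X_H^k Theta / k!.
   For k >= 1 every term of X_H^k Theta on g1 applies N to g1 or has its value in g1, so g1 stays
   a subalgebra. On g2 split Theta = mu1 + psi + mu2: the g1-part of X_H^k of these components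
   on g2 survives only for k = 3, 2, 1 respectively, and what remains of Theta^H is exactly
   l1(H) + l2(H,H)/2 + l3(H,H,H)/3!. *)

definition lift_map :: "('v2 \<Rightarrow> 'v1) \<Rightarrow> 'v1 \<times> 'v2 \<Rightarrow> 'v1 \<times> 'v2::zero" where
  "lift_map H a = (H (snd a), 0)"

definition X_tri :: "('a \<Rightarrow> 'a) \<Rightarrow> ('a \<Rightarrow> 'a \<Rightarrow> 'a \<Rightarrow> 'a::ab_group_add) \<Rightarrow> 'a \<Rightarrow> 'a \<Rightarrow> 'a \<Rightarrow> 'a"
  where "X_tri N f a b c = f (N a) b c + f a (N b) c + f a b (N c) - N (f a b c)"

definition triadditive :: "('a::ab_group_add \<Rightarrow> 'a \<Rightarrow> 'a \<Rightarrow> 'a) \<Rightarrow> bool" where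
  "triadditive f \<longleftrightarrow> (\<forall>b c. additive (\<lambda>a. f a b c)) \<and> (\<forall>a c. additive (\<lambda>b. f a b c))
     \<and> (\<forall>a b. additive (\<lambda>c. f a b c))"

lemma triadditive_add:
  assumes "triadditive f"
  shows "f (a + a') b c = f a b c + f a' b c" and "f a (b + b') c = f a b c + f a b' c"
    and "f a b (c + c') = f a b c + f a b c'"
  using assms additive.add[of "\<lambda>a. f a b c" a a'] additive.add[of "\<lambda>b. f a b c" b b']
    additive.add[of "\<lambda>c. f a b c" c c']
  unfolding triadditive_def by simp_all

lemma triadditive_zero:
  assumes "triadditive f"
  shows "f 0 b c = 0" and "f a 0 c = 0" and "f a b 0 = 0"
  using assms additive.zero[of "\<lambda>a. f a b c"] additive.zero[of "\<lambda>b. f a b c"]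
    additive.zero[of "\<lambda>c. f a b c"]
  unfolding triadditive_def by simp_all

lemma triadditive_skew:
  assumes "triadditive f" and alt: "\<And>x y. f x x y = 0"
  shows "f b a c = - f a b c"
proof -
  have "f (a + b) (a + b) c = f a a c + f a b c + (f b a c + f b b c)"
    by (simp only: triadditive_add[OF assms(1)] ac_simps)
  then have "f a b c + f b a c = 0" by (simp add: alt)
  then show ?thesis by (simp add: eq_neg_iff_add_eq_0 add.commute)
qed

lemma trilinear_imp_triadditive: "trilinear s T \<Longrightarrow> triadditive T"
  unfolding trilinear_def triadditive_def
  by (meson additive.intro linear_iff_module_hom module_hom.add)

lemma additive_funpow:
  fixes N :: "'a::ab_group_add \<Rightarrow> 'a"
  shows "additive N \<Longrightarrow> additive (N ^^ n)"
  by (induction n) (simp_all add: additive_def)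

lemma funpow_square_zero:
  assumes "additive N" and "\<And>x. N (N x) = 0" and "2 \<le> n"
  shows "(N ^^ n) x = 0"
proof -
  obtain m where "n = Suc (Suc m)" using \<open>2 \<le> n\<close> by (metis add_2_eq_Suc le_Suc_ex)
  then show ?thesis
    using additive.zero[OF additive_funpow[OF \<open>additive N\<close>]] assms(2)
    by (simp only: funpow_Suc_right o_apply)
qed

lemma X_tri_pow_invariant:
  fixes N :: "'a::ab_group_add \<Rightarrow> 'a"
  assumes "additive N"
    and add: "\<And>p q. P p \<Longrightarrow> P q \<Longrightarrow> P (p + q)" and diff: "\<And>p q. P p \<Longrightarrow> P q \<Longrightarrow> P (p - q)"
    and base: "\<And>ra rb rc s. Z (ra + rb + rc + s) \<Longrightarrow>
      P ((N ^^ s) (f ((N ^^ ra) a) ((N ^^ rb) b) ((N ^^ rc) c)))"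
  shows "Z (ra + rb + rc + s + k) \<Longrightarrow>
    P ((N ^^ s) ((X_tri N ^^ k) f ((N ^^ ra) a) ((N ^^ rb) b) ((N ^^ rc) c)))"
proof (induction k arbitrary: ra rb rc s)
  case 0
  then show ?case using base by simp
next
  case (Suc k)
  let ?g = "\<lambda>ra rb rc s. (N ^^ s) ((X_tri N ^^ k) f ((N ^^ ra) a) ((N ^^ rb) b) ((N ^^ rc) c))"
  interpret Ns: additive "N ^^ s" using additive_funpow[OF \<open>additive N\<close>] .
  have "(N ^^ s) ((X_tri N ^^ Suc k) f ((N ^^ ra) a) ((N ^^ rb) b) ((N ^^ rc) c))
      = ?g (Suc ra) rb rc s + ?g ra (Suc rb) rc s + ?g ra rb (Suc rc) s - ?g ra rb rc (Suc s)"
    by (simp add: X_tri_def Ns.add Ns.diff funpow_swap1[of N])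
  then show ?case
    using Suc.IH[of "Suc ra" rb rc s] Suc.IH[of ra "Suc rb" rc s] Suc.IH[of ra rb "Suc rc" s]
      Suc.IH[of ra rb rc "Suc s"] Suc.prems add diff by simp
qed

lemma X_tri_pow_nilpotent:
  assumes "additive N" and "\<And>x. N (N x) = 0" and "triadditive f" and "5 \<le> k"
  shows "(X_tri N ^^ k) f a b c = 0"
proof -
  have "(N ^^ s) (f ((N ^^ ra) a) ((N ^^ rb) b) ((N ^^ rc) c)) = 0"
    if "5 \<le> ra + rb + rc + s" for ra rb rc s
  proof -
    have "2 \<le> ra \<or> 2 \<le> rb \<or> 2 \<le> rc \<or> 2 \<le> s" using that by linarith
    then show ?thesis
      using funpow_square_zero[OF assms(1,2)] triadditive_zero[OF assms(3)]
        additive.zero[OF additive_funpow[OF assms(1)]] by auto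
  qed
  then show ?thesis
    using X_tri_pow_invariant[of N "\<lambda>p. p = 0" "\<lambda>n. 5 \<le> n" f a b c 0 0 0 0 k] assms by simp
qed

lemma X_tri_pow_add:
  assumes "additive N"
  shows "(X_tri N ^^ k) (\<lambda>a b c. f a b c + g a b c)
    = (\<lambda>a b c. (X_tri N ^^ k) f a b c + (X_tri N ^^ k) g a b c)"
  by (induction k) (simp_all add: fun_eq_iff X_tri_def additive.add[OF assms] algebra_simps)

lemma shuffles_0_left: "shuffles 0 n = {{}}"
  unfolding shuffles_def by (auto simp: card_eq_0_iff dest: finite_subset[OF _ finite_atLeastLessThan])

lemma shuffles_1_0: "shuffles (Suc 0) 0 = {{0}}"
  unfolding shuffles_def by (auto simp: card_1_singleton_iff)

lemma X_op_apply: "X_op H P [(a, b)] c = X_tri (lift_map H) (\<lambda>a b c. P [(a, b)] c) a b c"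
  unfolding X_op_def lts_bracket_def cochain_comp_def X_tri_def
  by (simp add: shuffles_0_left shuffles_1_0 shuffle_inv_def sgn_act_def shuf_first_def
      shuf_second_def lift0_def lift_def lift_map_def)

lemma X_op_pow_apply:
  "(X_op H ^^ k) P [(a, b)] c = (X_tri (lift_map H) ^^ k) (\<lambda>a b c. P [(a, b)] c) a b c"
proof (induction k arbitrary: a b c)
  case (Suc k)
  then have "(\<lambda>a b c. (X_op H ^^ k) P [(a, b)] c) = (X_tri (lift_map H) ^^ k) (\<lambda>a b c. P [(a, b)] c)"
    by (simp add: fun_eq_iff)
  then show ?case by (simp add: X_op_apply)
qed simp

lemma X_op_pow_bracket_cochain:
  "(X_op H ^^ k) (bracket_cochain T) [(a, b)] c = (X_tri (lift_map H) ^^ k) T a b c"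
  by (simp add: X_op_pow_apply bracket_cochain_def)

lemma l1H_eq: "l1H T H = (X_op H ^^ 1) (bracket_cochain (mu2_hat T))"
  by (simp add: l1H_def X_op_def)

lemma l2HH_eq: "l2HH T H = (X_op H ^^ 2) (bracket_cochain (psi_hat T))"
  by (simp add: l2HH_def X_op_def numeral_2_eq_2)

lemma l3HHH_eq: "l3HHH T H = (X_op H ^^ 3) (bracket_cochain (mu1_hat T))"
  by (simp add: l3HHH_def X_op_def numeral_3_eq_3)

lemma additive_lift_map: "additive H \<Longrightarrow> additive (lift_map H)"
  by (simp add: additive_def lift_map_def additive.add)

lemma lift_map_lift_map: "additive H \<Longrightarrow> lift_map H (lift_map H x) = 0"
  by (simp add: lift_map_def additive.zero zero_prod_def)

lemma funpow_lift_map: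
  assumes "additive H"
  shows "(lift_map H ^^ n) p = (if n = 0 then p else if n = 1 then lift_map H p else 0)"
  using funpow_square_zero[OF additive_lift_map lift_map_lift_map, OF assms assms]
  by (simp add: not_less_eq_eq)

lemma mu1_hat_apply: "mu1_hat T a b c =
     (fst (T (i1 (fst a)) (i1 (fst b)) (i1 (fst c))),
      snd (T (i1 (fst a)) (i1 (fst b)) (i2 (snd c))) + snd (T (i2 (snd a)) (i1 (fst b)) (i1 (fst c)))
      - snd (T (i2 (snd b)) (i1 (fst a)) (i1 (fst c))))"
  by (cases a; cases b; cases c) (simp add: mu1_hat_def)

lemma psi_hat_apply: "psi_hat T a b c =
     (fst (T (i1 (fst a)) (i1 (fst b)) (i2 (snd c))) + fst (T (i2 (snd a)) (i1 (fst b)) (i1 (fst c)))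
      - fst (T (i2 (snd b)) (i1 (fst a)) (i1 (fst c))),
      snd (T (i2 (snd a)) (i2 (snd b)) (i1 (fst c))) + snd (T (i1 (fst a)) (i2 (snd b)) (i2 (snd c)))
      - snd (T (i1 (fst b)) (i2 (snd a)) (i2 (snd c))))"
  by (cases a; cases b; cases c) (simp add: psi_hat_def)

lemma mu2_hat_apply: "mu2_hat T a b c =
     (fst (T (i2 (snd a)) (i2 (snd b)) (i1 (fst c))) + fst (T (i1 (fst a)) (i2 (snd b)) (i2 (snd c)))
      - fst (T (i1 (fst b)) (i2 (snd a)) (i2 (snd c))),
      snd (T (i2 (snd a)) (i2 (snd b)) (i2 (snd c))))"
  by (cases a; cases b; cases c) (simp add: mu2_hat_def)

lemma twilled_decomposition:
  assumes "triadditive T" and alt: "\<And>x y. T x x y = 0" and "twilled T"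
  shows "T a b c = mu1_hat T a b c + psi_hat T a b c + mu2_hat T a b c"
proof -
  note add = triadditive_add[OF assms(1)] and skew = triadditive_skew[OF assms(1) alt]
  have "T a b c = T (i1 (fst a) + i2 (snd a)) (i1 (fst b) + i2 (snd b)) (i1 (fst c) + i2 (snd c))"
    by (simp add: i1_def i2_def)
  also have "\<dots> = T (i1 (fst a)) (i1 (fst b)) (i1 (fst c)) + T (i1 (fst a)) (i1 (fst b)) (i2 (snd c))
       + T (i1 (fst a)) (i2 (snd b)) (i1 (fst c)) + T (i1 (fst a)) (i2 (snd b)) (i2 (snd c))
       + T (i2 (snd a)) (i1 (fst b)) (i1 (fst c)) + T (i2 (snd a)) (i1 (fst b)) (i2 (snd c))
       + T (i2 (snd a)) (i2 (snd b)) (i1 (fst c)) + T (i2 (snd a)) (i2 (snd b)) (i2 (snd c))"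
    by (simp only: add ac_simps)
  also have "\<dots> = mu1_hat T a b c + psi_hat T a b c + mu2_hat T a b c"
    using skew[of "i1 (fst a)" "i2 (snd b)" "i1 (fst c)"] skew[of "i2 (snd a)" "i1 (fst b)" "i2 (snd c)"]
      \<open>twilled T\<close>
    by (simp add: mu1_hat_apply psi_hat_apply mu2_hat_apply twilled_def prod_eq_iff i1_def i2_def
        algebra_simps)
  finally show ?thesis .
qed

(* N turns g2-arguments and g2-values into g1-ones, so mu1, psi, mu2 have weights 3, 2, 1:
   the number of their g1-arguments, plus one for the g2-valued part. *)
definition has_weight :: "('v2 \<Rightarrow> 'v1::ab_group_add)
    \<Rightarrow> nat \<Rightarrow> ('v1 \<times> 'v2::ab_group_add \<Rightarrow> 'v1 \<times> 'v2 \<Rightarrow> 'v1 \<times> 'v2 \<Rightarrow> 'v1 \<times> 'v2) \<Rightarrow> bool" where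
  "has_weight H d f \<longleftrightarrow> (\<forall>ra rb rc s u v w. ra + rb + rc + s \<noteq> d \<longrightarrow>
     fst ((lift_map H ^^ s)
       (f ((lift_map H ^^ ra) (i2 u)) ((lift_map H ^^ rb) (i2 v)) ((lift_map H ^^ rc) (i2 w)))) = 0)"

lemma has_weight_mu1_hat:
  assumes "additive H" and "triadditive T"
  shows "has_weight H 3 (mu1_hat T)"
  unfolding has_weight_def
  by (auto simp: funpow_lift_map[OF assms(1)] mu1_hat_apply lift_map_def i1_def i2_def
      triadditive_zero[OF assms(2)] additive.zero[OF assms(1)] zero_prod_def[symmetric])

lemma has_weight_psi_hat:
  assumes "additive H" and "triadditive T"
  shows "has_weight H 2 (psi_hat T)"
  unfolding has_weight_def
  by (auto simp: funpow_lift_map[OF assms(1)] psi_hat_apply lift_map_def i1_def i2_def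
      triadditive_zero[OF assms(2)] additive.zero[OF assms(1)] zero_prod_def[symmetric])

lemma has_weight_mu2_hat:
  assumes "additive H" and "triadditive T"
  shows "has_weight H 1 (mu2_hat T)"
  unfolding has_weight_def
  by (auto simp: funpow_lift_map[OF assms(1)] mu2_hat_apply lift_map_def i1_def i2_def
      triadditive_zero[OF assms(2)] additive.zero[OF assms(1)] zero_prod_def[symmetric])

lemma has_weight_X_tri_pow:
  assumes "additive H" and "has_weight H d f" and "k \<noteq> d"
  shows "fst ((X_tri (lift_map H) ^^ k) f (i2 u) (i2 v) (i2 w)) = 0"
  using X_tri_pow_invariant[of "lift_map H" "\<lambda>p. fst p = 0" "\<lambda>n. n \<noteq> d" f "i2 u" "i2 v" "i2 w"
      0 0 0 0 k]
    assms by (simp add: additive_lift_map has_weight_def)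

lemma sum_scale_zero: "vector_space s1 \<Longrightarrow> vector_space s2 \<Longrightarrow> sum_scale s1 s2 c 0 = 0"
  by (simp add: sum_scale_def zero_prod_def module.scale_zero_right module_iff_vector_space)

lemma twist_eq_sum:
  fixes H :: "'v2::ab_group_add \<Rightarrow> 'v1::ab_group_add"
    and T :: "'v1 \<times> 'v2 \<Rightarrow> 'v1 \<times> 'v2 \<Rightarrow> 'v1 \<times> 'v2 \<Rightarrow> 'v1 \<times> 'v2"
  assumes "vector_space s1" and "vector_space s2"
    and "\<And>m a b c. n \<le> m \<Longrightarrow> (X_tri (lift_map H) ^^ m) T a b c = 0"
  shows "twist s1 s2 H T a b c
    = (\<Sum>k<n. sum_scale s1 s2 (1 / fact k) ((X_tri (lift_map H) ^^ k) T a b c))"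
proof -
  let ?vanish = "\<lambda>n. \<forall>m\<ge>n. \<forall>Xs x. length Xs = 1 \<longrightarrow> ((X_op H ^^ m) (bracket_cochain T)) Xs x = 0"
  have "?vanish n"
  proof (intro allI impI)
    fix m :: nat and Xs :: "(('v1 \<times> 'v2) \<times> ('v1 \<times> 'v2)) list" and x :: "'v1 \<times> 'v2"
    assume "n \<le> m" and "length Xs = 1"
    then obtain a b where "Xs = [(a, b)]" by (cases Xs) auto
    then show "((X_op H ^^ m) (bracket_cochain T)) Xs x = 0"
      using assms(3)[OF \<open>n \<le> m\<close>] by (simp add: X_op_pow_bracket_cochain)
  qed
  define N where "N = twist_length H (bracket_cochain T)"
  have "N \<le> n"
    unfolding N_def twist_length_def by (rule Least_le) (rule \<open>?vanish n\<close>)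
  have "?vanish N"
    unfolding N_def twist_length_def by (rule LeastI) (rule \<open>?vanish n\<close>)
  have "(X_tri (lift_map H) ^^ k) T a b c = 0" if "N \<le> k" for k
    using \<open>?vanish N\<close>[rule_format, OF that, of "[(a, b)]" c] by (simp add: X_op_pow_bracket_cochain)
  then have "sum_scale s1 s2 (1 / fact k) ((X_tri (lift_map H) ^^ k) T a b c) = 0" if "N \<le> k" for k
    using that sum_scale_zero[OF assms(1,2)] by simp
  then have "(\<Sum>k<N. sum_scale s1 s2 (1 / fact k) ((X_tri (lift_map H) ^^ k) T a b c))
      = (\<Sum>k<n. sum_scale s1 s2 (1 / fact k) ((X_tri (lift_map H) ^^ k) T a b c))"
    using \<open>N \<le> n\<close> by (intro sum.mono_neutral_left) auto
  then show ?thesis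
    by (simp add: twist_def N_def X_op_pow_bracket_cochain)
qed

lemma snd_twist_i1:
  assumes "vector_space s1" and "vector_space s2" and "additive H" and "triadditive T"
    and "twilled T"
  shows "snd (twist s1 s2 H T (i1 x) (i1 y) (i1 z)) = 0"
proof -
  have base: "snd ((lift_map H ^^ s)
      (T ((lift_map H ^^ ra) (i1 x)) ((lift_map H ^^ rb) (i1 y)) ((lift_map H ^^ rc) (i1 z)))) = 0"
    for ra rb rc s
    using \<open>twilled T\<close>
    by (auto simp: funpow_lift_map[OF assms(3)] lift_map_def additive.zero[OF assms(3)]
        zero_prod_def[symmetric] triadditive_zero[OF assms(4)] twilled_def i1_def)
  have "snd ((X_tri (lift_map H) ^^ k) T (i1 x) (i1 y) (i1 z)) = 0" for k
    using X_tri_pow_invariant[of "lift_map H" "\<lambda>p. snd p = 0" "\<lambda>_. True" T "i1 x" "i1 y" "i1 z"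
        0 0 0 0 k] base additive_lift_map[OF assms(3)] by simp
  moreover have "twist s1 s2 H T (i1 x) (i1 y) (i1 z)
    = (\<Sum>k<5. sum_scale s1 s2 (1 / fact k) ((X_tri (lift_map H) ^^ k) T (i1 x) (i1 y) (i1 z)))"
    by (intro twist_eq_sum assms(1,2) X_tri_pow_nilpotent additive_lift_map assms(3,4)
        lift_map_lift_map)
  ultimately show ?thesis
    using module.scale_zero_right[OF assms(2)[folded module_iff_vector_space]]
    by (simp add: snd_sum sum_scale_def)
qed

lemma fst_twist_i2:
  fixes u v w :: "'v2::ab_group_add"
  assumes "vector_space s1" and "vector_space s2" and "additive H" and "triadditive T"
    and "\<And>x y. T x x y = 0" and "twilled T"
  defines "X k f \<equiv> fst ((X_tri (lift_map H) ^^ k) f (i2 u) (i2 v) (i2 w))"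
  shows "fst (twist s1 s2 H T (i2 u) (i2 v) (i2 w))
    = X 1 (mu2_hat T) + s1 (1 / 2) (X 2 (psi_hat T)) + s1 (1 / fact 3) (X 3 (mu1_hat T))"
proof -
  have T_eq: "T = (\<lambda>a b c. mu1_hat T a b c + psi_hat T a b c + mu2_hat T a b c)"
    by (intro ext twilled_decomposition assms(4-6))
  have X_T: "X k T = X k (mu1_hat T) + X k (psi_hat T) + X k (mu2_hat T)" for k
    unfolding X_def by (subst (1) T_eq) (simp add: X_tri_pow_add[OF additive_lift_map[OF assms(3)]])
  have mu1: "X k (mu1_hat T) = 0" if "k \<noteq> 3" for k
    unfolding X_def by (rule has_weight_X_tri_pow[OF assms(3) has_weight_mu1_hat[OF assms(3,4)] that])
  have psi: "X k (psi_hat T) = 0" if "k \<noteq> 2" for k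
    unfolding X_def by (rule has_weight_X_tri_pow[OF assms(3) has_weight_psi_hat[OF assms(3,4)] that])
  have mu2: "X k (mu2_hat T) = 0" if "k \<noteq> 1" for k
    unfolding X_def by (rule has_weight_X_tri_pow[OF assms(3) has_weight_mu2_hat[OF assms(3,4)] that])
  have "twist s1 s2 H T (i2 u) (i2 v) (i2 w)
    = (\<Sum>k<5. sum_scale s1 s2 (1 / fact k) ((X_tri (lift_map H) ^^ k) T (i2 u) (i2 v) (i2 w)))"
    by (intro twist_eq_sum assms(1,2) X_tri_pow_nilpotent additive_lift_map assms(3,4)
        lift_map_lift_map)
  then have "fst (twist s1 s2 H T (i2 u) (i2 v) (i2 w))
    = (\<Sum>k<5. s1 (1 / fact k) (X k (mu1_hat T) + X k (psi_hat T) + X k (mu2_hat T)))"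
    by (simp add: fst_sum sum_scale_def X_T[unfolded X_def] X_def)
  also have "\<dots> = X 1 (mu2_hat T) + s1 (1 / 2) (X 2 (psi_hat T)) + s1 (1 / fact 3) (X 3 (mu1_hat T))"
    using module.scale_zero_right[OF assms(1)[folded module_iff_vector_space]]
      module.scale_one[OF assms(1)[folded module_iff_vector_space]]
    by (simp add: lessThan_nat_numeral mu1 psi mu2)
  finally show ?thesis .
qed

theorem theorem4p6:
  fixes s1 :: "'k::field_char_0 \<Rightarrow> 'v1::ab_group_add \<Rightarrow> 'v1"
    and s2 :: "'k \<Rightarrow> 'v2::ab_group_add \<Rightarrow> 'v2"
    and T :: "'v1 \<times> 'v2 \<Rightarrow> 'v1 \<times> 'v2 \<Rightarrow> 'v1 \<times> 'v2 \<Rightarrow> 'v1 \<times> 'v2"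
    and H :: "'v2 \<Rightarrow> 'v1"
  assumes "vector_space s1" and "vector_space s2"
    and "trilinear (sum_scale s1 s2) T"
    and "lie_triple_system T"
    and "twilled T"
    and "Vector_Spaces.linear s2 s1 H"
  shows "twilled (twist s1 s2 H T) \<longleftrightarrow> maurer_cartan s1 T H"
proof -
  have H_additive: "additive H"
    using assms(6) by (simp add: additive.intro linear_iff_module_hom module_hom.add)
  have T_triadditive: "triadditive T"
    using assms(3) by (rule trilinear_imp_triadditive)
  have T_alternating: "T x x y = 0" for x y
    using assms(4) unfolding lie_triple_system_def by blast
  have "snd (twist s1 s2 H T (i1 x) (i1 y) (i1 z)) = 0" for x y z
    using snd_twist_i1[OF assms(1,2) H_additive T_triadditive assms(5)] .
  moreover have "maurer_cartan s1 T H \<longleftrightarrow> (\<forall>u v w. fst (twist s1 s2 H T (i2 u) (i2 v) (i2 w)) = 0)"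
    unfolding maurer_cartan_def l1H_eq l2HH_eq l3HHH_eq X_op_pow_bracket_cochain
      fst_twist_i2[OF assms(1,2) H_additive T_triadditive T_alternating assms(5)] ..
  ultimately show ?thesis
    by (simp add: twilled_def i1_def i2_def)
qed

end
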